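(* Let $A=(\alpha_n)_{n\in\mathbb{N}}$ and $B=(\beta_m)_{m\in\mathbb{N}}$ be sequences of positive real numbers with $\alpha_j\neq\alpha_\ell$ and $\beta_j\neq\beta_\ell$ for all $1\le j<\ell<\infty$, and set $\alpha_0=\beta_0=0$. Consider urn model I with these weights, and let $X_{n,m}$ be the number of white balls remaining when the process stops, started from $n$ white and $m$ black balls. Then for all $n,m\ge 1$ and $0\le k\le n$, \[ \mathbb{P}\{X_{n,m}=k\}=\Big(\prod_{h=1}^{m}\beta_h\Big)\Big(\prod_{h=k+1}^{n}\alpha_h\Big)\sum_{\ell=1}^{m}\frac{1}{\Big(\prod_{j=k}^{n}(\alpha_j+\beta_\ell)\Big)\Big(\prod_{\substack{i=1\\ i\neq\ell}}^{m}(\beta_i-\beta_\ell)\Big)} \] \[ =\Big(\prod_{h=1}^{m}\beta_h\Big)\Big(\prod_{h=k+1}^{n}\alpha_h\Big)\sum_{\ell=k}^{n}\frac{1}{\Big(\prod_{\substack{j=k\\ j\neq\ell}}^{n}(\alpha_j-\alpha_\ell)\Big)\Big(\prod_{i=1}^{m}(\beta_i+\alpha_\ell)\Big)}. \]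
   Context: Urn model I (sampling without replacement with general weights): an urn initially contains $n$ white and $m$ black balls. At each step, if the urn currently contains $n'$ white and $m'$ black balls, a white ball is drawn with probability $\alpha_{n'}/(\alpha_{n'}+\beta_{m'})$ and a black ball with probability $\beta_{m'}/(\alpha_{n'}+\beta_{m'})$; the drawn ball is discarded. The process stops as soon as one colour is exhausted. $X_{n,m}$ denotes the number of white balls in the urn when the process stops (so $X_{n,m}=0$ if the white balls are exhausted first, and otherwise it is the number of white balls left when all black balls have been drawn). Empty products equal $1$. *)

theory Defs
  imports "HOL-Probability.Probability"
begin

text \<open>Urn model I. urn a b n m is the law of X_{n,m}: the number of white balls
left when the process stops, started with n white and m black balls.\<close>

fun urn :: "(nat \<Rightarrow> real) \<Rightarrow> (nat \<Rightarrow> real) \<Rightarrow> nat \<Rightarrow> nat \<Rightarrow> nat pmf" where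
  "urn a b 0 m = return_pmf 0"
| "urn a b (Suc n) 0 = return_pmf (Suc n)"
| "urn a b (Suc n) (Suc m) =
     bind_pmf (bernoulli_pmf (a (Suc n) / (a (Suc n) + b (Suc m))))
       (\<lambda>white. if white then urn a b n (Suc m) else urn a b (Suc n) m)"

end

theory Submission
  imports Defs
begin

text \<open>Up to the two products, both sides of the theorem are the divided difference of
  g(x) = 1 / ((\<beta>(1) + x) \<cdots> (\<beta>(m) + x)) at the nodes \<alpha>(k), ..., \<alpha>(n), written out in two ways.
  That this expression obeys the one-step recurrence of the urn is the recursion of divided
  differences against the linear factor \<beta>(m+1) + x, by which the functions g for m and for m+1
  differ. The two partial fraction expansions agree because the divided difference of a constant
  vanishes on the nodes -\<alpha>(k), ..., -\<alpha>(n), \<beta>(1), ..., \<beta>(m).\<close>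

text \<open>This is (-1)^(card C - 1) times the divided difference of f at the nodes c p, p \<in> C.\<close>

definition divdiff :: "('a \<Rightarrow> real) \<Rightarrow> ('a \<Rightarrow> real) \<Rightarrow> 'a set \<Rightarrow> real" where
  "divdiff c f C = (\<Sum>p\<in>C. f p / (\<Prod>q\<in>C - {p}. c q - c p))"

lemma divdiff_empty [simp]: "divdiff c f {} = 0"
  by (simp add: divdiff_def)

lemma divdiff_singleton [simp]: "divdiff c f {x} = f x"
  by (simp add: divdiff_def)

lemma divdiff_cong:
  "(\<And>p. p \<in> C \<Longrightarrow> f p = g p) \<Longrightarrow> divdiff c f C = divdiff c g C"
  by (simp add: divdiff_def)

lemma divdiff_linear:
  "divdiff c (\<lambda>p. t * f p - g p) C = t * divdiff c f C - divdiff c g C"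
  by (simp add: divdiff_def sum_subtractf sum_distrib_left diff_divide_distrib)

lemma divdiff_insert:
  assumes "finite T" "x \<notin> T"
  shows "divdiff c f (insert x T) =
           f x / (\<Prod>q\<in>T. c q - c x) + divdiff c (\<lambda>p. f p / (c x - c p)) T"
proof -
  have "(\<Prod>q\<in>insert x T - {p}. c q - c p) = (c x - c p) * (\<Prod>q\<in>T - {p}. c q - c p)"
    if "p \<in> T" for p
    using assms that by (subst insert_Diff_if) (auto simp: prod.insert)
  then show ?thesis
    using assms by (simp add: divdiff_def insert_Diff_if divide_divide_eq_left' mult.commute cong: sum.cong)
qed

lemma divdiff_insert_linear_factor:
  assumes "finite J" "n \<notin> J" "inj_on c (insert n J)"
  shows "divdiff c (\<lambda>l. (t + c l) * g l) (insert n J) =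
           (t + c n) * divdiff c g (insert n J) - divdiff c g J"
proof -
  have "(t + c p) * g p / (c n - c p) = (t + c n) * (g p / (c n - c p)) - g p" if "p \<in> J" for p
  proof -
    have "c n \<noteq> c p" using assms that by (auto simp: inj_on_def)
    then show ?thesis by (simp add: field_simps)
  qed
  then have "divdiff c (\<lambda>p. (t + c p) * g p / (c n - c p)) J =
               (t + c n) * divdiff c (\<lambda>p. g p / (c n - c p)) J - divdiff c g J"
    by (simp add: divdiff_linear[symmetric] cong: divdiff_cong)
  then show ?thesis
    using assms by (simp add: divdiff_insert algebra_simps)
qed

lemma divdiff_one_recurrence:
  assumes "finite C" "inj_on c C" "x \<in> C" "y \<in> C"
  shows "(c x - c y) * divdiff c (\<lambda>_. 1) C =
           divdiff c (\<lambda>_. 1) (C - {x}) - divdiff c (\<lambda>_. 1) (C - {y})"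
proof -
  have shift: "divdiff c (\<lambda>l. c l - c z) C = - divdiff c (\<lambda>_. 1) (C - {z})" if "z \<in> C" for z
    using divdiff_insert_linear_factor[of "C - {z}" z c "- c z" "\<lambda>_. 1"] assms that
    by (simp add: insert_absorb)
  have "(c x - c y) * divdiff c (\<lambda>_. 1) C = divdiff c (\<lambda>_. c x - c y) C"
    by (simp add: divdiff_def sum_distrib_left)
  also have "\<dots> = divdiff c (\<lambda>l. c l - c y) C - divdiff c (\<lambda>l. c l - c x) C"
    using divdiff_linear[of c 1 "\<lambda>l. c l - c y" "\<lambda>l. c l - c x" C] by simp
  finally show ?thesis
    using shift assms by simp
qed

lemma divdiff_one_eq_0:
  assumes "finite C" "inj_on c C" "card C \<ge> 2"
  shows "divdiff c (\<lambda>_. 1) C = 0"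
  using assms
proof (induction "card C" arbitrary: C rule: less_induct)
  case less
  obtain x y where xy: "x \<in> C" "y \<in> C" "x \<noteq> y"
    using less.prems(1,3) card_le_Suc0_iff_eq[of C] by fastforce
  have "divdiff c (\<lambda>_. 1) (C - {x}) = divdiff c (\<lambda>_. 1) (C - {y})"
  proof (cases "card C = 2")
    case True
    then obtain u v where "C = {u, v}"
      by (auto simp: card_2_iff)
    with xy have "C - {x} = {y}" "C - {y} = {x}"
      by auto
    then show ?thesis by simp
  next
    case False
    have "divdiff c (\<lambda>_. 1) (C - {z}) = 0" if "z \<in> C" for z
    proof (rule less.hyps)
      show "card (C - {z}) < card C" "card (C - {z}) \<ge> 2"
        using False less.prems that by (auto simp: card_Diff_singleton)
    qed (use less.prems in \<open>auto intro: inj_on_subset\<close>)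
    then show ?thesis
      using xy by simp
  qed
  moreover have "c x \<noteq> c y"
    using less.prems(2) xy by (auto simp: inj_on_def)
  ultimately show ?case
    using divdiff_one_recurrence[OF less.prems(1,2) xy(1,2)] by simp
qed

lemma partial_fraction_swap:
  fixes x :: "'a \<Rightarrow> real" and y :: "'b \<Rightarrow> real"
  assumes fin: "finite A" "finite B" and ne: "A \<noteq> {}" "B \<noteq> {}"
    and inj: "inj_on x A" "inj_on y B"
    and nz: "\<And>a b. a \<in> A \<Longrightarrow> b \<in> B \<Longrightarrow> x a + y b \<noteq> 0"
  shows "(\<Sum>b\<in>B. 1 / ((\<Prod>a\<in>A. x a + y b) * (\<Prod>i\<in>B - {b}. y i - y b))) =
         (\<Sum>a\<in>A. 1 / ((\<Prod>j\<in>A - {a}. x j - x a) * (\<Prod>i\<in>B. y i + x a)))"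
    (is "?S1 = ?S2")
proof -
  define c where "c = case_sum (\<lambda>a. - x a) y"
  define N where "N = card A"
  have N: "N \<ge> 1"
    using fin ne by (simp add: N_def Suc_le_eq card_gt_0_iff)
  have "c (Inl a) \<noteq> c (Inr b)" "c (Inr b) \<noteq> c (Inl a)" if "a \<in> A" "b \<in> B" for a b
    using nz[OF that] by (auto simp: c_def add_eq_0_iff)
  then have "inj_on c (A <+> B)"
    using inj by (intro inj_onI) (elim PlusE; auto simp: c_def dest: inj_onD)
  moreover have "card (A <+> B) \<ge> 2"
    using fin ne card_gt_0_iff[of A] card_gt_0_iff[of B] by (simp add: card_Plus)
  ultimately have "divdiff c (\<lambda>_. 1) (A <+> B) = 0"
    using fin by (intro divdiff_one_eq_0) auto
  moreover have "divdiff c (\<lambda>_. 1) (A <+> B) = (-1) ^ (N - 1) * ?S2 + (-1) ^ N * ?S1"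
  proof -
    have sign: "1 / ((-1) ^ k * X) = (-1) ^ k * (1 / X)" for k and X :: real
      by (cases "even k") auto
    have "(\<Prod>q\<in>(A <+> B) - {Inl a}. c q - c (Inl a)) =
            (-1) ^ (N - 1) * ((\<Prod>j\<in>A - {a}. x j - x a) * (\<Prod>i\<in>B. y i + x a))"
      if "a \<in> A" for a
    proof -
      have "(A <+> B) - {Inl a} = (A - {a}) <+> B" by auto
      then show ?thesis
        using fin that prod_uminus[of "\<lambda>j. x j - x a" "A - {a}"]
        by (simp add: prod.Plus c_def o_def N_def)
    qed
    moreover have "(\<Prod>q\<in>(A <+> B) - {Inr b}. c q - c (Inr b)) =
            (-1) ^ N * ((\<Prod>a\<in>A. x a + y b) * (\<Prod>i\<in>B - {b}. y i - y b))"
      for b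
    proof -
      have "(A <+> B) - {Inr b} = A <+> (B - {b})" by auto
      then show ?thesis
        using fin prod_uminus[of "\<lambda>a. x a + y b" A]
        by (simp add: prod.Plus c_def o_def N_def)
    qed
    ultimately show ?thesis
      using fin by (simp add: divdiff_def sum.Plus sign sum_distrib_left)
  qed
  moreover have "(-1 :: real) ^ N = - ((-1) ^ (N - 1))"
    using N by (cases N) auto
  ultimately have "(-1) ^ (N - 1) * (?S2 - ?S1) = 0"
    by (simp add: algebra_simps)
  then show ?thesis
    by simp
qed

lemma nonneg_if_pos_except_0:
  fixes a :: "nat \<Rightarrow> real"
  assumes "\<forall>j\<ge>1. a j > 0" "a 0 = 0"
  shows "a l \<ge> 0"
  using assms by (cases "l = 0") (auto simp: less_imp_le)

lemma inj_if_pos_except_0: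
  fixes a :: "nat \<Rightarrow> real"
  assumes "\<forall>j\<ge>1. a j > 0" "a 0 = 0" "inj_on a {1..}"
  shows "inj a"
proof (rule injI)
  fix i j assume eq: "a i = a j"
  have zero: "a l = 0 \<longleftrightarrow> l = 0" for l
    using assms(1)[rule_format, of l] assms(2) by (cases "l = 0") auto
  show "i = j"
  proof (cases "i = 0 \<or> j = 0")
    case True
    then show ?thesis using eq zero by metis
  next
    case False
    then show ?thesis using eq assms(3) by (auto dest: inj_onD)
  qed
qed

definition urn_formula :: "(nat \<Rightarrow> real) \<Rightarrow> (nat \<Rightarrow> real) \<Rightarrow> nat \<Rightarrow> nat \<Rightarrow> nat \<Rightarrow> real" where
  "urn_formula a b n m k =
     (\<Prod>h=1..m. b h) * (\<Prod>h=k+1..n. a h) * divdiff a (\<lambda>l. 1 / (\<Prod>i=1..m. b i + a l)) {k..n}"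

lemma urn_formula_eq_0:
  "n < k \<Longrightarrow> urn_formula a b n m k = 0"
  by (simp add: urn_formula_def)

lemma urn_formula_0_left:
  assumes "a 0 = 0" "\<forall>j\<ge>1. b j > 0"
  shows "urn_formula a b 0 m k = pmf (return_pmf 0) k"
  using assms by (cases k) (auto simp: urn_formula_def)

lemma urn_formula_0_right:
  assumes "inj a"
  shows "urn_formula a b n 0 k = pmf (return_pmf n) k"
proof -
  have "divdiff a (\<lambda>_. 1) {k..n} = 0" if "k < n"
    using that assms by (intro divdiff_one_eq_0) (auto intro: inj_on_subset)
  then show ?thesis
    by (cases "k < n"; cases "k = n") (simp_all add: urn_formula_def)
qed

lemma urn_formula_recurrence:
  assumes A: "a (Suc n) > 0" and B: "b (Suc m) > 0" and a_nonneg: "\<forall>l. a l \<ge> 0" and "inj a"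
  defines "p \<equiv> a (Suc n) / (a (Suc n) + b (Suc m))"
  shows "urn_formula a b (Suc n) (Suc m) k =
           p * urn_formula a b n (Suc m) k + (1 - p) * urn_formula a b (Suc n) m k"
proof (cases "k \<le> Suc n")
  case False
  then show ?thesis by (simp add: urn_formula_eq_0)
next
  case True
  define g where "g m' = (\<lambda>l. 1 / (\<Prod>i=1..m'. b i + a l))" for m'
  define Bm where "Bm = (\<Prod>h=1..m. b h)"
  define P where "P = (\<Prod>h=k+1..n. a h)"
  define Q where "Q = (\<Prod>h=k+1..Suc n. a h)"
  define D1 where "D1 = divdiff a (g (Suc m)) {k..n}"
  define D2 where "D2 = divdiff a (g (Suc m)) {k..Suc n}"
  have interval: "{k..Suc n} = insert (Suc n) {k..n}"
    using True by auto
  have g_Suc: "g m = (\<lambda>l. (b (Suc m) + a l) * g (Suc m) l)"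
  proof
    fix l
    have "b (Suc m) + a l \<noteq> 0"
      using B a_nonneg by (metis add_pos_nonneg less_irrefl)
    then show "g m l = (b (Suc m) + a l) * g (Suc m) l"
      by (simp add: g_def atLeastAtMostSuc_conv)
  qed
  have dd: "divdiff a (g m) {k..Suc n} = (b (Suc m) + a (Suc n)) * D2 - D1"
    unfolding D1_def D2_def interval g_Suc
    by (rule divdiff_insert_linear_factor) (use \<open>inj a\<close> in \<open>auto dest: injD intro: inj_on_subset\<close>)
  have F2: "urn_formula a b (Suc n) m k = Bm * Q * ((b (Suc m) + a (Suc n)) * D2 - D1)"
    unfolding dd[symmetric] by (simp add: urn_formula_def Bm_def Q_def g_def)
  have F1: "urn_formula a b n (Suc m) k = Bm * b (Suc m) * P * D1"
    by (simp add: urn_formula_def Bm_def P_def D1_def g_def)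
  have F: "urn_formula a b (Suc n) (Suc m) k = Bm * b (Suc m) * Q * D2"
    by (simp add: urn_formula_def Bm_def Q_def D2_def g_def)
  \<comment> \<open>For k = Suc n the products differ, but then D1 is a divided difference over the empty set.\<close>
  have PQ: "a (Suc n) * P * D1 = Q * D1"
    using True by (cases "k = Suc n") (simp_all add: P_def Q_def D1_def)
  have AB: "a (Suc n) + b (Suc m) \<noteq> 0"
    using A B by simp
  have "1 - p = b (Suc m) / (a (Suc n) + b (Suc m))"
    unfolding p_def using AB by (simp add: field_simps)
  then have "p * urn_formula a b n (Suc m) k + (1 - p) * urn_formula a b (Suc n) m k =
          (Bm * b (Suc m) * (a (Suc n) * P * D1) +
           b (Suc m) * (Bm * Q * ((b (Suc m) + a (Suc n)) * D2 - D1))) / (a (Suc n) + b (Suc m))"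
    unfolding F1 F2 by (simp add: p_def add_divide_distrib mult_ac)
  also have "\<dots> = Bm * b (Suc m) * Q * D2"
    unfolding PQ using AB by (simp add: field_simps)
  finally show ?thesis
    unfolding F by simp
qed

lemma pmf_urn_eq_urn_formula:
  assumes "\<forall>j\<ge>1. a j > 0" "\<forall>j\<ge>1. b j > 0" "a 0 = 0" "inj a"
  shows "pmf (urn a b n m) k = urn_formula a b n m k"
  using assms
proof (induction a b n m arbitrary: k rule: urn.induct)
  case (1 a b m)
  then show ?case
    by (simp add: urn_formula_0_left)
next
  case (2 a b n)
  then show ?case
    by (simp add: urn_formula_0_right)
next
  case (3 a b n m)
  have pos: "0 < a (Suc n)" "0 < b (Suc m)"
    using "3.prems" by auto
  then have "set_pmf (bernoulli_pmf (a (Suc n) / (a (Suc n) + b (Suc m)))) = UNIV"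
    by simp
  then have IH: "pmf (urn a b n (Suc m)) k = urn_formula a b n (Suc m) k"
    "pmf (urn a b (Suc n) m) k = urn_formula a b (Suc n) m k" for k
    using "3.IH"[of True] "3.IH"[of False] "3.prems" by simp_all
  have "\<forall>l. a l \<ge> 0"
    using "3.prems"(1,3) by (blast intro: nonneg_if_pos_except_0)
  then show ?case
    using pos "3.prems"(4) by (simp add: pmf_bind IH urn_formula_recurrence)
qed

theorem theorem1:
  fixes alpha beta :: "nat \<Rightarrow> real" and n m k :: nat
  assumes alpha_pos: "\<forall>j\<ge>1. alpha j > 0"
    and beta_pos: "\<forall>j\<ge>1. beta j > 0"
    and alpha_inj: "inj_on alpha {1..}"
    and beta_inj: "inj_on beta {1..}"
    and alpha0: "alpha 0 = 0"
    and beta0: "beta 0 = 0"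
    and n: "n \<ge> 1" and m: "m \<ge> 1" and k: "k \<le> n"
  shows "pmf (urn alpha beta n m) k =
           (\<Prod>h=1..m. beta h) * (\<Prod>h=k+1..n. alpha h) *
           (\<Sum>l=1..m. 1 / ((\<Prod>j=k..n. alpha j + beta l) *
                              (\<Prod>i\<in>{1..m} - {l}. beta i - beta l)))
       \<and> pmf (urn alpha beta n m) k =
           (\<Prod>h=1..m. beta h) * (\<Prod>h=k+1..n. alpha h) *
           (\<Sum>l=k..n. 1 / ((\<Prod>j\<in>{k..n} - {l}. alpha j - alpha l) *
                              (\<Prod>i=1..m. beta i + alpha l)))"
proof -
  have inj: "inj alpha"
    using alpha_pos alpha0 alpha_inj by (rule inj_if_pos_except_0)
  have "pmf (urn alpha beta n m) k =
          (\<Prod>h=1..m. beta h) * (\<Prod>h=k+1..n. alpha h) *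
          (\<Sum>l=k..n. 1 / ((\<Prod>j\<in>{k..n} - {l}. alpha j - alpha l) * (\<Prod>i=1..m. beta i + alpha l)))"
    using pmf_urn_eq_urn_formula[OF alpha_pos beta_pos alpha0 inj]
    by (simp add: urn_formula_def divdiff_def mult.commute)
  moreover have "(\<Sum>l=1..m. 1 / ((\<Prod>j=k..n. alpha j + beta l) * (\<Prod>i\<in>{1..m} - {l}. beta i - beta l))) =
          (\<Sum>l=k..n. 1 / ((\<Prod>j\<in>{k..n} - {l}. alpha j - alpha l) * (\<Prod>i=1..m. beta i + alpha l)))"
  proof (rule partial_fraction_swap)
    show "inj_on alpha {k..n}" "inj_on beta {1..m}"
      using inj beta_inj by (auto intro: inj_on_subset)
    show "alpha j + beta l \<noteq> 0" if "j \<in> {k..n}" "l \<in> {1..m}" for j l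
      using that beta_pos nonneg_if_pos_except_0[OF alpha_pos alpha0, of j] by force
  qed (use k m in auto)
  ultimately show ?thesis
    by simp
qed

end
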